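(* Let $k\ge2$ be an integer, $g(z)=z^3-z^2+7z+1$, and $\Gamma_k(t)=\Psi_k(g(t))$. Let $A=\{z\in\mathbb{C}:\Re z\le0,\ |g(z)|=1\}$ and $B=\{z\in\mathbb{C}:\Re z>0,\ |g(z)|=1\}$. Then $\Gamma_k$ has exactly $\varphi(k)$ roots in $A$ and exactly $2\varphi(k)$ roots in $B$.
   Context: $\Psi_k$ is the $k$-th cyclotomic polynomial and $\varphi$ is Euler's totient function. *)

theory Defs
  imports "HOL-Analysis.Analysis" "HOL-Number_Theory.Number_Theory"
begin

definition cyclotomic_poly :: "nat \<Rightarrow> complex poly" where
  "cyclotomic_poly k =
     (\<Prod>j\<in>{j\<in>{1..k}. coprime j k}. [:- cis (2 * pi * real j / real k), 1:])"

definition g_poly :: "complex poly" where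
  "g_poly = [:1, 7, -1, 1:]"

definition Gamma_poly :: "nat \<Rightarrow> complex poly" where
  "Gamma_poly k = pcompose (cyclotomic_poly k) g_poly"

end

theory Submission
  imports Defs "HOL-Computational_Algebra.Fundamental_Theorem_Algebra"
begin

(* For every \<zeta> on the unit circle the equation g(z) = \<zeta> has three simple roots, exactly one
   of them in the closed left half-plane.  On the level curve |g| = 1 the triangle inequality
   excludes the annulus 1/2 < |z| < 2, and the points of the curve with Re z \<le> 0 are exactly
   those in the disc |z| \<le> 1/2.  The critical points of g are not on the curve, so the roots
   are simple; g is injective on the small disc, because (g x - g y) / (x - y) =
   x^2 + x y + y^2 - x - y + 7 cannot vanish there; and the three roots cannot all have modulus
   at least 2, since their product is \<zeta> - 1.  Finally \<Gamma>_k vanishes exactly where g takes one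
   of the \<phi>(k) primitive k-th roots of unity. *)

lemma card_preimage_constant_fibres:
  assumes "finite T" and "0 < n"
    and "\<And>y. y \<in> T \<Longrightarrow> card {x. P x \<and> f x = y} = n"
  shows "card {x. P x \<and> f x \<in> T} = n * card T"
proof -
  have "{x. P x \<and> f x \<in> T} = (\<Union>y\<in>T. {x. P x \<and> f x = y})"
    by auto
  also have "card \<dots> = (\<Sum>y\<in>T. card {x. P x \<and> f x = y})"
    using assms by (intro card_UN_disjoint) (auto intro: card_ge_0_finite)
  also have "\<dots> = n * card T"
    using assms(3) by simp
  finally show ?thesis .
qed

lemma card_roots_rsquarefree_complex:
  fixes p :: "complex poly"
  assumes "rsquarefree p"
  shows "card {z. poly p z = 0} = degree p"
proof -
  have "p \<noteq> 0" using assms by (simp add: rsquarefree_def)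
  then have "degree p = degree (\<Prod>z | poly p z = 0. [:-z, 1:])"
    by (subst (1) complex_poly_decompose_rsquarefree[OF assms, symmetric]) simp
  also have "\<dots> = card {z. poly p z = 0}"
    by (subst degree_prod_sum_eq) auto
  finally show ?thesis ..
qed

lemma poly_0_rsquarefree_complex:
  fixes p :: "complex poly"
  assumes "rsquarefree p"
  shows "poly p 0 = lead_coeff p * (\<Prod>z | poly p z = 0. - z)"
  by (subst (1) complex_poly_decompose_rsquarefree[OF assms, symmetric]) (simp add: poly_prod)

lemma cyclotomic_poly_roots:
  "{w. poly (cyclotomic_poly k) w = 0} = (\<lambda>j. cis (2 * pi * real j / real k)) ` totatives k"
proof -
  have "{j \<in> {1..k}. coprime j k} = totatives k"
    by (auto simp: totatives_def)
  then show ?thesis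
    by (auto simp: cyclotomic_poly_def poly_prod)
qed

lemma card_cyclotomic_poly_roots: "card {w. poly (cyclotomic_poly k) w = 0} = totient k"
proof -
  have "inj_on (\<lambda>j. cis (2 * pi * real j / real k)) (totatives k)"
  proof (cases "k \<le> 1")
    case True
    then consider "k = 0" | "k = 1" by linarith
    then show ?thesis by cases auto
  next
    case False
    then have "inj_on (\<lambda>j. cis (2 * pi * real j / real k)) {..<k}"
      by (intro bij_betw_imp_inj_on[OF Complex.bij_betw_roots_unity]) simp
    moreover have "totatives k \<subseteq> {..<k}"
      using False totatives_less by force
    ultimately show ?thesis
      by (rule inj_on_subset)
  qed
  then show ?thesis
    by (simp add: cyclotomic_poly_roots card_image totient_def)
qed

lemma norm_cyclotomic_poly_root:
  assumes "poly (cyclotomic_poly k) w = 0"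
  shows "cmod w = 1"
proof -
  have "w \<in> (\<lambda>j. cis (2 * pi * real j / real k)) ` totatives k"
    using assms cyclotomic_poly_roots by blast
  then show ?thesis by auto
qed

lemma poly_g_poly: "poly g_poly z = z^3 - z^2 + 7*z + 1"
  by (simp add: g_poly_def algebra_simps power3_eq_cube power2_eq_square)

lemma g_level_set_norm_cases:
  assumes "cmod (poly g_poly z) = 1"
  shows "cmod z \<le> 1/2 \<or> 2 \<le> cmod z"
proof (rule ccontr)
  define r where "r = cmod z"
  assume "\<not> ?thesis"
  then have r: "1/2 < r" "r < 2" by (auto simp: r_def)
  have "7*r - 1 \<le> cmod (7*z + 1)"
    using norm_triangle_ineq4[of "7*z + 1" 1] by (simp add: r_def norm_mult)
  also have "\<dots> \<le> cmod (poly g_poly z) + cmod (z^3 - z^2)"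
    using norm_triangle_ineq4[of "poly g_poly z" "z^3 - z^2"] by (simp add: poly_g_poly)
  also have "cmod (z^3 - z^2) \<le> r^3 + r^2"
    using norm_triangle_ineq4[of "z^3" "z^2"] by (simp add: r_def norm_power)
  finally have "0 \<le> (r - 2) * (r^2 + 3*r - 1)"
    using assms by (simp add: algebra_simps power2_eq_square power3_eq_cube)
  moreover have "(r - 2) * (r^2 + 3*r - 1) < 0"
    using r zero_le_power2[of r] by (intro mult_neg_pos) linarith+
  ultimately show False by simp
qed

lemma g_level_set_small_imp_Re_nonpos:
  assumes "cmod (poly g_poly z) = 1" and "cmod z \<le> 1/2"
  shows "Re z \<le> 0"
proof (rule ccontr)
  define x y w where "x = Re z" and "y = Im z" and "w = poly g_poly z - 1"
  assume "\<not> ?thesis"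
  then have "0 < x" by (simp add: x_def)
  have "(cmod (1 + w))^2 = 1"
    using assms(1) by (simp add: w_def)
  then have "(1 + Re w)^2 + (Im w)^2 = 1"
    by (simp add: cmod_power2)
  then have Re_w_nonpos: "Re w \<le> 0"
    by (simp add: power2_eq_square algebra_simps) (smt (verit) zero_le_square)
  have "x^2 + y^2 = (cmod z)^2" by (simp add: cmod_power2 x_def y_def)
  also have "\<dots> \<le> (1/2)^2" using assms(2) by (intro power_mono) auto
  also have "\<dots> = 1/4" by (simp add: power2_eq_square)
  finally have small: "x^2 + y^2 \<le> 1/4" .
  then have "x^2 \<le> 1/4" using zero_le_power2[of y] by linarith
  then have "x \<le> 1/2" using power2_le_imp_le[of x "1/2"] by (simp add: power_divide)
  have "y^2 \<le> 1/4" using small zero_le_power2[of x] by linarith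
  have "0 < x * (x^2 - 3*y^2 - x + 7)"
    using \<open>0 < x\<close> \<open>x \<le> 1/2\<close> \<open>y^2 \<le> 1/4\<close> zero_le_power2[of x] by (intro mult_pos_pos) linarith+
  moreover have "Re w = x * (x^2 - 3*y^2 - x + 7) + y^2"
    by (simp add: w_def x_def y_def poly_g_poly power2_eq_square power3_eq_cube algebra_simps)
  ultimately show False using Re_w_nonpos zero_le_power2[of y] by linarith
qed

lemma g_level_set_Re_nonpos_imp_norm_less_2:
  assumes "cmod (poly g_poly z) = 1" and "Re z \<le> 0"
  shows "cmod z < 2"
proof (rule ccontr)
  define x y q where "x = Re z" and "y = Im z" and "q = z^2 - z + 7"
  assume "\<not> ?thesis"
  then have "2 \<le> cmod z" by simp
  have "poly g_poly z - 1 = z * q"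
    by (simp add: q_def poly_g_poly algebra_simps power2_eq_square power3_eq_cube)
  then have "cmod z * cmod q \<le> 2"
    using norm_triangle_ineq4[of "poly g_poly z" 1] assms(1) by (simp add: norm_mult)
  then have "cmod q \<le> 1"
    using mult_right_mono[OF \<open>2 \<le> cmod z\<close> norm_ge_zero[of q]] by linarith
  then have Re_q: "Re q \<le> 1" and Im_q: "\<bar>Im q\<bar> \<le> 1"
    using abs_Re_le_cmod abs_Im_le_cmod by (smt (verit))+
  have "\<bar>y\<bar> \<le> \<bar>y\<bar> * (1 - 2*x)"
    using assms(2) by (simp add: x_def mult_le_cancel_left1)
  also have "\<dots> = \<bar>Im q\<bar>"
  proof -
    have "Im q = - y * (1 - 2*x)"
      by (simp add: q_def x_def y_def power2_eq_square algebra_simps)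
    then show ?thesis using assms(2) by (simp add: abs_mult x_def)
  qed
  finally have "y^2 \<le> 1"
    using Im_q abs_le_square_iff[of y 1] by simp
  moreover have "0 \<le> x^2 - x"
    using assms(2) zero_le_power2[of x] unfolding x_def by linarith
  moreover have "Re q = x^2 - y^2 - x + 7"
    by (simp add: q_def x_def y_def power2_eq_square)
  ultimately show False using Re_q by linarith
qed

lemma g_level_set_Re_nonpos_iff:
  assumes "cmod (poly g_poly z) = 1"
  shows "Re z \<le> 0 \<longleftrightarrow> cmod z \<le> 1/2"
  using g_level_set_norm_cases g_level_set_small_imp_Re_nonpos
    g_level_set_Re_nonpos_imp_norm_less_2 assms by fastforce

lemma g_critical_point_not_on_level_set:
  assumes "3*z^2 - 2*z + 7 = 0"
  shows "cmod (poly g_poly z) \<noteq> 1"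
proof
  assume level: "cmod (poly g_poly z) = 1"
  from g_level_set_norm_cases[OF this] show False
  proof
    assume small: "cmod z \<le> 1/2"
    have "2*z - 3*z^2 = 7 - (3*z^2 - 2*z + 7)"
      by (simp add: algebra_simps)
    then have "7 = cmod (2*z - 3*z^2)"
      using assms by simp
    also have "\<dots> \<le> 2 * cmod z + 3 * (cmod z)^2"
      using norm_triangle_ineq4[of "2*z" "3*z^2"] by (simp add: norm_mult norm_power)
    also have "\<dots> \<le> 2 * (1/2) + 3 * (1/2)^2"
      using small by (intro add_mono mult_left_mono power_mono) auto
    finally show False by (simp add: power2_eq_square)
  next
    assume large: "2 \<le> cmod z"
    have "9 * poly g_poly z = (3*z - 1) * (3*z^2 - 2*z + 7) + 40*z + 16"
      by (simp add: poly_g_poly algebra_simps power2_eq_square power3_eq_cube)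
    then have "9 * poly g_poly z = 40*z + 16"
      using assms by simp
    then have "9 = cmod (40*z + 16)"
      using level by (metis norm_mult norm_numeral mult.right_neutral)
    also have "\<dots> \<ge> 40 * cmod z - 16"
      using norm_triangle_ineq4[of "40*z + 16" 16] by (simp add: norm_mult)
    finally show False using large by simp
  qed
qed

lemma rsquarefree_g_poly_minus_unimodular:
  assumes "cmod \<zeta> = 1"
  shows "rsquarefree (g_poly - [:\<zeta>:])"
  unfolding rsquarefree_roots
proof (intro allI notI)
  fix z
  assume "poly (g_poly - [:\<zeta>:]) z = 0 \<and> poly (pderiv (g_poly - [:\<zeta>:])) z = 0"
  then have "cmod (poly g_poly z) = 1" and "3*z^2 - 2*z + 7 = 0"
    using assms by (auto simp: g_poly_def pderiv_pCons algebra_simps power2_eq_square)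
  then show False using g_critical_point_not_on_level_set by blast
qed

lemma inj_on_g_poly_small_disc: "inj_on (poly g_poly) (cball 0 (1/2))"
proof (rule inj_onI, rule ccontr)
  fix x y
  assume "x \<in> cball 0 (1/2)" "y \<in> cball 0 (1/2)" "poly g_poly x = poly g_poly y" "x \<noteq> y"
  then have small: "cmod x \<le> 1/2" "cmod y \<le> 1/2"
    and "(x - y) * (x^2 + x*y + y^2 - x - y + 7) = 0"
    by (auto simp: poly_g_poly algebra_simps power2_eq_square power3_eq_cube)
  with \<open>x \<noteq> y\<close> have "x^2 + x*y + y^2 - x - y = -7"
    by (simp add: add_eq_0_iff2)
  then have "7 = cmod (x^2 + x*y + y^2 - x - y)"
    by simp
  also have "\<dots> \<le> (cmod x)^2 + cmod x * cmod y + (cmod y)^2 + cmod x + cmod y"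
    using norm_triangle_ineq4[of "x^2 + x*y + y^2 - x" y] norm_triangle_ineq4[of "x^2 + x*y + y^2" x]
      norm_triangle_ineq[of "x^2 + x*y" "y^2"] norm_triangle_ineq[of "x^2" "x*y"]
    by (simp add: norm_mult norm_power)
  also have "\<dots> \<le> (1/2)^2 + 1/2 * (1/2) + (1/2)^2 + 1/2 + 1/2"
    using small by (intro add_mono mult_mono power_mono) auto
  finally show False by (simp add: power2_eq_square)
qed

lemma card_g_poly_fibre:
  assumes "cmod \<zeta> = 1"
  shows "card {z. poly g_poly z = \<zeta>} = 3"
proof -
  have "card {z. poly g_poly z = \<zeta>} = card {z. poly (g_poly - [:\<zeta>:]) z = 0}"
    by simp
  also have "\<dots> = degree (g_poly - [:\<zeta>:])"
    by (rule card_roots_rsquarefree_complex[OF rsquarefree_g_poly_minus_unimodular[OF assms]])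
  also have "\<dots> = 3"
    by (simp add: g_poly_def)
  finally show ?thesis .
qed

lemma prod_g_poly_fibre:
  assumes "cmod \<zeta> = 1"
  shows "(\<Prod>z | poly g_poly z = \<zeta>. - z) = 1 - \<zeta>"
proof -
  have "1 - \<zeta> = poly (g_poly - [:\<zeta>:]) 0"
    by (simp add: g_poly_def)
  also have "\<dots> = lead_coeff (g_poly - [:\<zeta>:]) * (\<Prod>z | poly (g_poly - [:\<zeta>:]) z = 0. - z)"
    by (rule poly_0_rsquarefree_complex[OF rsquarefree_g_poly_minus_unimodular[OF assms]])
  also have "lead_coeff (g_poly - [:\<zeta>:]) = 1"
    by (simp add: g_poly_def)
  finally show ?thesis by simp
qed

lemma card_g_poly_fibre_Re_nonpos:
  assumes "cmod \<zeta> = 1"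
  shows "card {z. Re z \<le> 0 \<and> poly g_poly z = \<zeta>} = 1"
proof -
  define F where "F = {z. poly g_poly z = \<zeta>}"
  define L where "L = {z. Re z \<le> 0 \<and> poly g_poly z = \<zeta>}"
  have "finite F"
    using card_g_poly_fibre[OF assms] by (intro card_ge_0_finite) (simp add: F_def)
  have "L \<subseteq> cball 0 (1/2)"
    using g_level_set_Re_nonpos_iff assms by (auto simp: L_def)
  then have "card L = card (poly g_poly ` L)"
    by (intro card_image[symmetric] inj_on_subset[OF inj_on_g_poly_small_disc])
  also have "\<dots> \<le> card {\<zeta>}"
    by (intro card_mono) (auto simp: L_def)
  finally have "card L \<le> 1" by simp
  moreover have "L \<noteq> {}"
  proof
    assume "L = {}"
    then have "2 \<le> cmod z" if "z \<in> F" for z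
      using that g_level_set_norm_cases[of z] g_level_set_Re_nonpos_iff[of z] assms
      by (force simp: F_def L_def)
    then have "(\<Prod>z\<in>F. 2) \<le> (\<Prod>z\<in>F. cmod z)"
      by (intro prod_mono) auto
    also have "\<dots> = cmod (\<Prod>z\<in>F. - z)"
      by (simp add: prod_norm[symmetric])
    also have "\<dots> = cmod (1 - \<zeta>)"
      using prod_g_poly_fibre[OF assms] by (simp add: F_def)
    also have "\<dots> \<le> 2"
      using norm_triangle_ineq4[of 1 \<zeta>] assms by simp
    finally show False
      using card_g_poly_fibre[OF assms] by (simp add: F_def)
  qed
  moreover have "finite L"
    using \<open>finite F\<close> by (rule finite_subset[rotated]) (auto simp: F_def L_def)
  ultimately show ?thesis
    using card_gt_0_iff[of L] unfolding L_def by linarith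
qed

lemma card_g_poly_fibre_Re_pos:
  assumes "cmod \<zeta> = 1"
  shows "card {z. 0 < Re z \<and> poly g_poly z = \<zeta>} = 2"
proof -
  have "{z. 0 < Re z \<and> poly g_poly z = \<zeta>} =
      {z. poly g_poly z = \<zeta>} - {z. Re z \<le> 0 \<and> poly g_poly z = \<zeta>}"
    by auto
  also have "card \<dots> = 3 - 1"
    using card_g_poly_fibre[OF assms] card_g_poly_fibre_Re_nonpos[OF assms]
    by (subst card_Diff_subset) (auto intro: card_ge_0_finite)
  finally show ?thesis by simp
qed

theorem proposition3p8:
  fixes k :: nat
  assumes "k \<ge> 2"
  defines "A \<equiv> {z::complex. Re z \<le> 0 \<and> cmod (poly g_poly z) = 1}"
      and "B \<equiv> {z::complex. Re z > 0 \<and> cmod (poly g_poly z) = 1}"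
  shows "card {z \<in> A. poly (Gamma_poly k) z = 0} = totient k
       \<and> card {z \<in> B. poly (Gamma_poly k) z = 0} = 2 * totient k"
proof -
  \<comment> \<open>The argument does not use k \<ge> 2: the count holds for every k.\<close>
  define U where "U = {w. poly (cyclotomic_poly k) w = 0}"
  have "finite U"
    by (simp add: U_def cyclotomic_poly_roots)
  have "card U = totient k"
    by (simp only: U_def card_cyclotomic_poly_roots)
  have U_norm: "cmod w = 1" if "w \<in> U" for w
    using that norm_cyclotomic_poly_root by (simp add: U_def)
  have Gamma_roots: "poly (Gamma_poly k) z = 0 \<longleftrightarrow> poly g_poly z \<in> U" for z
    by (simp add: U_def Gamma_poly_def poly_pcompose)
  have "{z \<in> A. poly (Gamma_poly k) z = 0} = {z. Re z \<le> 0 \<and> poly g_poly z \<in> U}"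
   and "{z \<in> B. poly (Gamma_poly k) z = 0} = {z. 0 < Re z \<and> poly g_poly z \<in> U}"
    using U_norm by (auto simp: A_def B_def Gamma_roots)
  moreover have "card {z. Re z \<le> 0 \<and> poly g_poly z \<in> U} = 1 * card U"
    using \<open>finite U\<close> U_norm card_g_poly_fibre_Re_nonpos
    by (intro card_preimage_constant_fibres) auto
  moreover have "card {z. 0 < Re z \<and> poly g_poly z \<in> U} = 2 * card U"
    using \<open>finite U\<close> U_norm card_g_poly_fibre_Re_pos
    by (intro card_preimage_constant_fibres) auto
  ultimately show ?thesis
    using \<open>card U = totient k\<close> by simp
qed

end
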